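(* Consider random variables $(Y,D,M,X,Z_1,Z_2)$ with supports $\mathcal{Y},\mathcal{D},\mathcal{M},\mathcal{X},\mathcal{Z}_1,\mathcal{Z}_2$, generated by a causal model as described in the context, and assume: (A1) $M(y)=M$, $D(m,y,z_2)=D$, $X(d,m,y,z_2)=X$, $Z_1(d,m,y,z_2)=Z_1$ and $Z_2(m,y)=Z_2$ for all $d\in\mathcal{D}$, $m\in\mathcal{M}$, $z_2\in\mathcal{Z}_2$, $y\in\mathcal{Y}$; and the model is faithful: only variables which are d-separated in the causal graph are statistically (conditionally) independent. Consider the conditions (TIam) $Y\perp\!\!\!\perp Z_1\mid D=d,X=x,Z_2=z_2$ for all $d\in\mathcal{D},x\in\mathcal{X},z_2\in\mathcal{Z}_2$; (TIbm) $M\perp\!\!\!\perp Z_1\mid D=d,X=x,Z_2=z_2$ for all $d\in\mathcal{D},x\in\mathcal{X},z_2\in\mathcal{Z}_2$; (TIc) $Y\perp\!\!\!\perp Z_2\mid D=d,M=m,X=x$ for all $d\in\mathcal{D},m\in\mathcal{M},x\in\mathcal{X}$; (TId) $Y\perp\!\!\!\perp Z_1\mid D=d,M=m,X=x$ for all $d\in\mathcal{D},m\in\mathcal{M},x\in\mathcal{X}$. Then (TIam), (TIbm), (TIc) together imply (TId); and (TIbm), (TIc), (TId) together imply (TIam).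
   Context: $D$ is a treatment, $M$ a mediator, $Y$ an outcome, $X$ observed pre-treatment covariates, $Z_1$ a (suspected) instrument for $D$, $Z_2$ a (suspected) instrument for $M$. The variables (together with possibly unobserved variables) are generated by a recursive nonparametric structural equation model whose causal graph is a directed acyclic graph containing the observed and unobserved variables; the joint distribution satisfies the causal Markov property with respect to this graph (d-separation implies conditional independence). For variables $A,B,\dots$, $A(b,\dots)$ denotes the potential value of $A$ when $B,\dots$ are set by intervention to $b,\dots$; $A(b)=A$ means intervening on $B$ does not change $A$. $\perp\!\!\!\perp$ denotes conditional statistical independence. d-separation: a path between $A$ and $B$ is blocked by a conditioning set $C$ if it contains a chain or fork whose middle node is in $C$, or a collider such that neither it nor any of its descendants is in $C$; $A$ and $B$ are d-separated given $C$ if every path between them is blocked. *)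

theory Defs
  imports Main
begin

text \<open>Causal DAG over a finite node type; E is the set of directed edges (u,v) meaning u -> v.\<close>

definition adj :: "('v \<times> 'v) set \<Rightarrow> 'v \<Rightarrow> 'v \<Rightarrow> bool" where
  "adj E u v \<longleftrightarrow> (u, v) \<in> E \<or> (v, u) \<in> E"

definition is_path :: "('v \<times> 'v) set \<Rightarrow> 'v list \<Rightarrow> bool" where
  "is_path E p \<longleftrightarrow> 2 \<le> length p \<and> distinct p \<and>
     (\<forall>i. Suc i < length p \<longrightarrow> adj E (p ! i) (p ! Suc i))"

definition collider :: "('v \<times> 'v) set \<Rightarrow> 'v list \<Rightarrow> nat \<Rightarrow> bool" where
  "collider E p i \<longleftrightarrow> (p ! (i - 1), p ! i) \<in> E \<and> (p ! Suc i, p ! i) \<in> E"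

definition blocked :: "('v \<times> 'v) set \<Rightarrow> 'v set \<Rightarrow> 'v list \<Rightarrow> bool" where
  "blocked E C p \<longleftrightarrow> (\<exists>i. 0 < i \<and> Suc i < length p \<and>
     (if collider E p i then (\<forall>c\<in>C. (p ! i, c) \<notin> E\<^sup>*) else p ! i \<in> C))"

definition dsep :: "('v \<times> 'v) set \<Rightarrow> 'v set \<Rightarrow> 'v set \<Rightarrow> 'v set \<Rightarrow> bool" where
  "dsep E A B C \<longleftrightarrow> (\<forall>p. is_path E p \<and> hd p \<in> A \<and> last p \<in> B \<longrightarrow> blocked E C p)"

text \<open>Graphical reading of the potential-outcome restriction A(b,...) = A:
  intervening on the nodes in Bs does not affect a, i.e. no directed path from
  any node of Bs to a.\<close>
definition no_effect :: "('v \<times> 'v) set \<Rightarrow> 'v set \<Rightarrow> 'v \<Rightarrow> bool" where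
  "no_effect E Bs a \<longleftrightarrow> (\<forall>b\<in>Bs. (b, a) \<notin> E\<^sup>+)"

definition pw_disjoint3 :: "'v set \<Rightarrow> 'v set \<Rightarrow> 'v set \<Rightarrow> bool" where
  "pw_disjoint3 A B C \<longleftrightarrow> A \<inter> B = {} \<and> A \<inter> C = {} \<and> B \<inter> C = {}"

end

theory Submission
  imports Defs
begin

(* By the Markov property and faithfulness, each independence in question is equivalent to the
   corresponding d-separation, so both implications are statements about the DAG, and they hold
   in every DAG. Both are instances of one exchange
   principle for conditioning sets S and T. Let p be a path from a to b that is open given S.
   If p meets a node u of T - S, its segment from u to b is open given S. Otherwise, if p is
   blocked given T, its first blocking node is a collider c with a descendant s in S but none in
   T; following p up to its first node on a directed path from c to s, and then that directed
   path, gives a path from a to s in S - T that is open given T. *)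

definition is_directed_walk :: "('v \<times> 'v) set \<Rightarrow> 'v list \<Rightarrow> bool" where
  "is_directed_walk E q \<longleftrightarrow> (\<forall>k. Suc k < length q \<longrightarrow> (q ! k, q ! Suc k) \<in> E)"

lemma rtrancl_imp_directed_walk:
  assumes "(u, v) \<in> E\<^sup>*"
  shows "\<exists>q. q \<noteq> [] \<and> hd q = u \<and> last q = v \<and> is_directed_walk E q"
  using assms
proof (induction rule: converse_rtrancl_induct)
  case base
  show ?case by (intro exI[of _ "[v]"]) (simp add: is_directed_walk_def)
next
  case (step u u')
  then obtain q where q: "q \<noteq> []" "hd q = u'" "last q = v" "is_directed_walk E q"
    by blast
  have "is_directed_walk E (u # q)"
    unfolding is_directed_walk_def
  proof (intro allI impI)
    fix k assume "Suc k < length (u # q)"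
    then show "((u # q) ! k, (u # q) ! Suc k) \<in> E"
      using q step.hyps(1) by (cases k) (auto simp: hd_conv_nth is_directed_walk_def)
  qed
  then show ?case using q by (intro exI[of _ "u # q"]) simp
qed

lemma directed_walk_trancl:
  assumes "is_directed_walk E q" "i < j" "j < length q"
  shows "(q ! i, q ! j) \<in> E\<^sup>+"
  using assms(2,3)
proof (induction j)
  case 0
  then show ?case by simp
next
  case (Suc j)
  have edge: "(q ! j, q ! Suc j) \<in> E"
    using assms(1) Suc.prems by (simp add: is_directed_walk_def)
  show ?case
  proof (cases "i = j")
    case True
    then show ?thesis using edge by auto
  next
    case False
    then have "(q ! i, q ! j) \<in> E\<^sup>+" using Suc by simp
    then show ?thesis using edge by (rule trancl_into_trancl)
  qed
qed

lemma directed_walk_rtrancl_from_hd: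
  assumes "is_directed_walk E q" "k < length q"
  shows "(q ! 0, q ! k) \<in> E\<^sup>*"
  using directed_walk_trancl[OF assms(1) _ assms(2), of 0] by (cases k) auto

lemma acyclic_directed_walk_distinct:
  assumes "acyclic E" "is_directed_walk E q"
  shows "distinct q"
  unfolding distinct_conv_nth
proof (intro allI impI)
  fix i j assume ij: "i < length q" "j < length q" "i \<noteq> j"
  have "(q ! min i j, q ! max i j) \<in> E\<^sup>+"
    using ij by (intro directed_walk_trancl[OF assms(2)]) auto
  then have "q ! min i j \<noteq> q ! max i j"
    using assms(1) unfolding acyclic_def by auto
  then show "q ! i \<noteq> q ! j"
    using ij(3) by (cases "i < j") (auto simp: min_def max_def)
qed

lemma is_path_rev_imp:
  assumes "is_path E p"
  shows "is_path E (rev p)"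
  unfolding is_path_def
proof (intro conjI allI impI)
  fix i assume i: "Suc i < length (rev p)"
  define k where "k = length p - Suc (Suc i)"
  have k: "Suc k < length p" "Suc k = length p - Suc i" "k = length p - Suc (Suc i)"
    using i by (auto simp: k_def)
  then have "adj E (p ! k) (p ! Suc k)"
    using assms unfolding is_path_def by blast
  then show "adj E (rev p ! i) (rev p ! Suc i)"
    using i k by (simp add: rev_nth adj_def) blast
qed (use assms in \<open>auto simp: is_path_def\<close>)

lemma is_path_rev: "is_path E (rev p) \<longleftrightarrow> is_path E p"
  using is_path_rev_imp[of E p] is_path_rev_imp[of E "rev p"] by auto

definition blocks :: "('v \<times> 'v) set \<Rightarrow> 'v set \<Rightarrow> 'v list \<Rightarrow> nat \<Rightarrow> bool" where
  "blocks E C p i \<longleftrightarrow> 0 < i \<and> Suc i < length p \<and>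
     (if collider E p i then (\<forall>c\<in>C. (p ! i, c) \<notin> E\<^sup>*) else p ! i \<in> C)"

lemma blocked_iff_blocks: "blocked E C p \<longleftrightarrow> (\<exists>i. blocks E C p i)"
  by (simp add: blocked_def blocks_def)

lemma blocks_rev:
  assumes "blocks E C p i"
  shows "blocks E C (rev p) (length p - Suc i)"
proof -
  define j where "j = length p - Suc i"
  have i: "0 < i" "Suc i < length p" using assms by (auto simp: blocks_def)
  then have j: "0 < j" "Suc j < length p" "length p - Suc (Suc j) = i - 1"
    unfolding j_def by linarith+
  have "rev p ! j = p ! i" "rev p ! (j - 1) = p ! Suc i" "rev p ! Suc j = p ! (i - 1)"
    using i j unfolding j_def by (simp_all add: rev_nth Suc_diff_Suc)
  then have "collider E (rev p) j \<longleftrightarrow> collider E p i"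
    unfolding collider_def by auto
  then show ?thesis
    using assms j \<open>rev p ! j = p ! i\<close> unfolding blocks_def j_def by simp
qed

lemma blocked_rev: "blocked E C (rev p) \<longleftrightarrow> blocked E C p"
  using blocks_rev[of E C p] blocks_rev[of E C "rev p"] by (auto simp: blocked_iff_blocks)

lemma dsep_sym: "dsep E A B C \<longleftrightarrow> dsep E B A C"
proof -
  have "dsep E B A C" if "dsep E A B C" for A B
    unfolding dsep_def
  proof (intro allI impI)
    fix p assume p: "is_path E p \<and> hd p \<in> B \<and> last p \<in> A"
    then have "p \<noteq> []" by (auto simp: is_path_def)
    then have "blocked E C (rev p)"
      using that p by (auto simp: dsep_def is_path_rev hd_rev last_rev)
    then show "blocked E C p" by (simp add: blocked_rev)
  qed
  then show ?thesis by blast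
qed

lemma is_path_drop:
  assumes "is_path E p" "Suc j < length p"
  shows "is_path E (drop j p)"
  using assms unfolding is_path_def by auto

lemma blocks_drop:
  assumes "blocks E C (drop j p) i"
  shows "blocks E C p (j + i)"
proof -
  have "collider E (drop j p) i \<longleftrightarrow> collider E p (j + i)"
    using assms unfolding collider_def blocks_def by auto
  then show ?thesis using assms unfolding blocks_def by auto
qed

lemma blocked_drop: "blocked E C (drop j p) \<Longrightarrow> blocked E C p"
  using blocks_drop by (meson blocked_iff_blocks)

lemma splice_nth_prefix:
  assumes "j < length p" "k < length q" "p ! j = q ! k" "i \<le> j"
  shows "(take j p @ drop k q) ! i = p ! i"
  using assms by (cases "i = j") (auto simp: nth_append)

lemma splice_nth_suffix:
  assumes "j \<le> length p" "k \<le> length q" "j \<le> i"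
  shows "(take j p @ drop k q) ! i = q ! (k + (i - j))"
  using assms by (simp add: nth_append)

lemma is_path_splice:
  assumes p: "is_path E p" and q: "is_directed_walk E q" "distinct q"
    and jk: "j < length p" "k < length q" "p ! j = q ! k"
    and disjoint: "set (take j p) \<inter> set q = {}"
    and len: "2 \<le> length (take j p @ drop k q)"
  shows "is_path E (take j p @ drop k q)"
  unfolding is_path_def
proof (intro conjI allI impI)
  show "distinct (take j p @ drop k q)"
    using p q(2) disjoint set_drop_subset[of k q] by (auto simp: is_path_def)
next
  fix i assume i: "Suc i < length (take j p @ drop k q)"
  show "adj E ((take j p @ drop k q) ! i) ((take j p @ drop k q) ! Suc i)"
  proof (cases "Suc i \<le> j")
    case True
    then show ?thesis
      using p jk by (simp add: splice_nth_prefix is_path_def)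
  next
    case False
    then have "Suc (k + (i - j)) < length q" using i jk by auto
    then show ?thesis
      using False q(1) jk
      by (simp add: splice_nth_suffix Suc_diff_le adj_def is_directed_walk_def)
  qed
qed (use len in simp)

lemma not_blocked_splice:
  assumes acyclic: "acyclic E" and q: "is_directed_walk E q" "set q \<inter> T = {}"
    and jk: "j < length p" "k < length q" "p ! j = q ! k"
    and open_prefix: "\<forall>i<j. \<not> blocks E T p i"
  shows "\<not> blocked E T (take j p @ drop k q)"
proof
  let ?r = "take j p @ drop k q"
  assume "blocked E T ?r"
  then obtain i where i: "blocks E T ?r i" by (auto simp: blocked_iff_blocks)
  show False
  proof (cases "i < j")
    case True
    then have "collider E ?r i \<longleftrightarrow> collider E p i"
      using jk by (simp add: collider_def splice_nth_prefix)
    then have "blocks E T p i"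
      using i True jk by (auto simp: blocks_def splice_nth_prefix)
    then show False using open_prefix True by blast
  next
    case False
    then have bound: "Suc (k + (i - j)) < length q"
      using i jk by (auto simp: blocks_def)
    have nodes: "?r ! i = q ! (k + (i - j))" "?r ! Suc i = q ! Suc (k + (i - j))"
      using False jk by (simp_all add: splice_nth_suffix Suc_diff_le)
    have edge: "(?r ! i, ?r ! Suc i) \<in> E"
      using q(1) bound nodes by (simp add: is_directed_walk_def)
    have "\<not> collider E ?r i"
    proof
      assume "collider E ?r i"
      then have "(?r ! i, ?r ! i) \<in> E\<^sup>+"
        using edge by (auto simp: collider_def)
      then show False using acyclic by (simp add: acyclic_def)
    qed
    then have "?r ! i \<in> T" using i by (simp add: blocks_def)
    moreover have "?r ! i \<in> set q" using nodes bound by simp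
    ultimately show False using q(2) by blast
  qed
qed

lemma blocks_collider_if_not_blocked:
  assumes "\<not> blocked E S p" "blocks E T p i" "set p \<inter> T \<subseteq> S"
  shows "collider E p i \<and> (\<forall>t\<in>T. (p ! i, t) \<notin> E\<^sup>*) \<and> (\<exists>s\<in>S. (p ! i, s) \<in> E\<^sup>*)"
proof -
  have not_blocks_S: "\<not> blocks E S p i"
    using assms(1) by (auto simp: blocked_iff_blocks)
  have "p ! i \<in> set p" using assms(2) by (simp add: blocks_def)
  then have "collider E p i"
    using assms(2,3) not_blocks_S unfolding blocks_def by (metis IntI subsetD)
  then show ?thesis
    using assms(2) not_blocks_S by (auto simp: blocks_def)
qed

lemma open_path_to_conditioning_diff:
  assumes acyclic: "acyclic E" and p: "is_path E p"
    and open_S: "\<not> blocked E S p" and blocked_T: "blocked E T p"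
    and avoid: "set p \<inter> T \<subseteq> S" and hd_p: "hd p \<notin> S"
  shows "\<exists>r. is_path E r \<and> hd r = hd p \<and> last r \<in> S - T \<and> \<not> blocked E T r"
proof -
  obtain i where i: "blocks E T p i" and first: "\<forall>i'<i. \<not> blocks E T p i'"
    using blocked_T exists_least_iff[of "blocks E T p"] by (auto simp: blocked_iff_blocks)
  have i_bounds: "0 < i" "Suc i < length p" using i by (auto simp: blocks_def)
  obtain s where no_desc_T: "\<forall>t\<in>T. (p ! i, t) \<notin> E\<^sup>*" and s: "s \<in> S" "(p ! i, s) \<in> E\<^sup>*"
    using blocks_collider_if_not_blocked[OF open_S i avoid] by blast
  obtain q where q: "q \<noteq> []" "hd q = p ! i" "last q = s" and walk: "is_directed_walk E q"
    using rtrancl_imp_directed_walk[OF s(2)] by blast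
  have q_T: "set q \<inter> T = {}"
    using directed_walk_rtrancl_from_hd[OF walk] q(1,2) no_desc_T
    by (fastforce simp: in_set_conv_nth hd_conv_nth)
  obtain j where j: "p ! j \<in> set q" and before_j: "\<forall>j'<j. p ! j' \<notin> set q"
    using exists_least_iff[of "\<lambda>j. p ! j \<in> set q"] q(1,2) by (metis hd_in_set)
  have "j \<le> i" using before_j q(1,2) by (metis hd_in_set not_le)
  with i_bounds have j_bound: "j < length p" by simp
  obtain k where k: "k < length q" "p ! j = q ! k" using j by (metis in_set_conv_nth)
  define r where "r = take j p @ drop k q"
  have disjoint: "set (take j p) \<inter> set q = {}"
    using before_j by (fastforce simp: in_set_conv_nth)
  have last_r: "last r = s" using k q unfolding r_def by simp
  have "2 \<le> length r"
  proof (rule ccontr)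
    assume "\<not> 2 \<le> length r"
    then have "j = 0" "Suc k = length q" using k(1) j_bound by (auto simp: r_def)
    then have "hd p = s"
      using k q(1,3) j_bound by (auto simp: hd_conv_nth last_conv_nth simp flip: \<open>Suc k = length q\<close>)
    then show False using hd_p s(1) by simp
  qed
  then have "is_path E r"
    unfolding r_def
    using is_path_splice[OF p walk acyclic_directed_walk_distinct[OF acyclic walk] j_bound k disjoint]
    by simp
  moreover have "hd r = hd p"
  proof -
    have "r \<noteq> []" "p \<noteq> []" using \<open>2 \<le> length r\<close> j_bound by auto
    then show ?thesis
      using j_bound k splice_nth_prefix[of j p k q 0] by (simp add: r_def hd_conv_nth)
  qed
  moreover have "s \<notin> T" using no_desc_T s(2) by blast
  moreover have "\<not> blocked E T r"
    unfolding r_def using not_blocked_splice[OF acyclic walk q_T j_bound k] first \<open>j \<le> i\<close> by simp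
  ultimately show ?thesis using last_r s(1) by blast
qed

lemma dsep_exchange_conditioning:
  assumes acyclic: "acyclic E" and "a \<notin> S" "b \<notin> T"
    and "dsep E {a} {b} T"
    and to_S_minus_T: "\<And>t. t \<in> S - T \<Longrightarrow> dsep E {a} {t} T"
    and from_T_minus_S: "\<And>u. u \<in> T - S \<Longrightarrow> dsep E {u} {b} S"
  shows "dsep E {a} {b} S"
  unfolding dsep_def
proof (intro allI impI)
  fix p assume "is_path E p \<and> hd p \<in> {a} \<and> last p \<in> {b}"
  then have p: "is_path E p" "hd p = a" "last p = b" by auto
  show "blocked E S p"
  proof (rule ccontr)
    assume open_S: "\<not> blocked E S p"
    have avoid: "set p \<inter> T \<subseteq> S"
    proof
      fix u assume u: "u \<in> set p \<inter> T"
      show "u \<in> S"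
      proof (rule ccontr)
        assume "u \<notin> S"
        obtain j where j: "j < length p" "p ! j = u" using u by (auto simp: in_set_conv_nth)
        have "u \<noteq> last p" using u p(3) \<open>b \<notin> T\<close> by auto
        then have "Suc j < length p"
          using j by (metis Suc_lessI diff_Suc_1 last_conv_nth length_0_conv less_zeroE)
        then have "blocked E S (drop j p)"
          using from_T_minus_S[of u] u \<open>u \<notin> S\<close> j p
          by (auto simp: dsep_def is_path_drop hd_drop_conv_nth)
        then show False using open_S blocked_drop by blast
      qed
    qed
    have "blocked E T p" using \<open>dsep E {a} {b} T\<close> p by (simp add: dsep_def)
    then obtain r where "is_path E r" "hd r = a" "last r \<in> S - T" "\<not> blocked E T r"
      using open_path_to_conditioning_diff[OF acyclic p(1) open_S _ avoid] p(2) \<open>a \<notin> S\<close> by blast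
    then show False using to_S_minus_T[of "last r"] by (simp add: dsep_def)
  qed
qed

theorem lemma1:
  fixes E :: "('v::finite \<times> 'v) set"
    and indep :: "'v set \<Rightarrow> 'v set \<Rightarrow> 'v set \<Rightarrow> bool"
    and y d m x z1 z2 :: 'v
  assumes dag: "acyclic E"
    and obs: "distinct [y, d, m, x, z1, z2]"
    and markov: "\<forall>A B C. pw_disjoint3 A B C \<longrightarrow> dsep E A B C \<longrightarrow> indep A B C"
    and faithful: "\<forall>A B C. pw_disjoint3 A B C \<longrightarrow> indep A B C \<longrightarrow> dsep E A B C"
    and A1_M: "no_effect E {y} m"
    and A1_D: "no_effect E {m, y, z2} d"
    and A1_X: "no_effect E {d, m, y, z2} x"
    and A1_Z1: "no_effect E {d, m, y, z2} z1"
    and A1_Z2: "no_effect E {m, y} z2"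
  shows "(indep {y} {z1} {d, x, z2} \<and> indep {m} {z1} {d, x, z2} \<and> indep {y} {z2} {d, m, x}
            \<longrightarrow> indep {y} {z1} {d, m, x})
       \<and> (indep {m} {z1} {d, x, z2} \<and> indep {y} {z2} {d, m, x} \<and> indep {y} {z1} {d, m, x}
            \<longrightarrow> indep {y} {z1} {d, x, z2})"
proof -
  have indep_iff_dsep: "indep A B C \<longleftrightarrow> dsep E A B C" if "pw_disjoint3 A B C" for A B C
    using markov faithful that by blast
  have TId: "dsep E {y} {z1} {d, m, x}"
    if "dsep E {y} {z1} {d, x, z2}" "dsep E {m} {z1} {d, x, z2}" "dsep E {y} {z2} {d, m, x}"
    using dsep_exchange_conditioning[OF dag, of z1 "{d, m, x}" y "{d, x, z2}"] that obs
    by (auto simp: dsep_sym)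
  have TIam: "dsep E {y} {z1} {d, x, z2}"
    if "dsep E {m} {z1} {d, x, z2}" "dsep E {y} {z2} {d, m, x}" "dsep E {y} {z1} {d, m, x}"
    using dsep_exchange_conditioning[OF dag, of y "{d, x, z2}" z1 "{d, m, x}"] that obs
    by auto
  show ?thesis
    using TId TIam obs by (simp add: indep_iff_dsep pw_disjoint3_def)
qed

end
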